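(* Let $b\ge1$, $n\ge1$. Let $K_{n+1}$ be the capacity of the bucket containing label $n+1$ in the random tree of size $n+1$, and let $N_{n,m}$ ($1\le m\le b$) be the number of nodes of capacity $m$ in the random tree of size $n$, both generated by the same growth process. Then for $2\le m\le b$, $$\mathbb P\{K_{n+1}=m\}=\mathbb E(N_{n,m-1})\cdot\begin{cases}\frac{m-1}{n},&\text{bucket recursive trees},\\ \frac{(d-1)(m-1)+1}{(d-1)n+1},&\text{$(b,d)$-ary increasing trees},\\ \frac{(\alpha+1)(m-1)-1}{(\alpha+1)n-1},&\text{$(b,\alpha)$-PORTs},\end{cases}$$ and $$\mathbb P\{K_{n+1}=1\}=\begin{cases}\mathbb E(N_{n,b})\frac bn,&\text{bucket recursive trees},\\ \mathbb E(N_{n,b})\frac{(d-1)b+1}{(d-1)n+1}+\frac{1-\sum_{j=1}^b\mathbb E(N_{n,j})}{(d-1)n+1},&\text{$(b,d)$-ary increasing trees},\\ \mathbb E(N_{n,b})\frac{(\alpha+1)b-1}{(\alpha+1)n-1}+\frac{-1+\sum_{j=1}^b\mathbb E(N_{n,j})}{(\alpha+1)n-1},&\text{$(b,\alpha)$-PORTs}.\end{cases}$$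
   Context: Fix $b\ge1$. A bucket tree is a rooted unordered tree whose nodes ("buckets") $v$ contain $c(v)\in\{1,\dots,b\}$ labels (capacity); $v$ is saturated if $c(v)=b$, and every node with a child is saturated; $d^+(v)$ is its number of children; the size is the total number of labels. Growth process: start with a root bucket containing label 1; given the tree of size $n\ge1$, choose a node $v$ with probability $p(v)$; if $v$ is unsaturated, add label $n+1$ to $v$, otherwise attach to $v$ a new child bucket containing only $n+1$. The families: bucket recursive trees $p(v)=c(v)/n$; $(b,d)$-ary increasing trees ($d\ge2$ integer) $p(v)=\frac{(d-1)c(v)+1-d^+(v)}{(d-1)n+1}$; $(b,\alpha)$-plane oriented recursive trees, $(b,\alpha)$-PORTs ($\alpha>0$) $p(v)=\frac{d^+(v)+(\alpha+1)c(v)-1}{(\alpha+1)n-1}$ (capacities and out-degrees in the current tree of size $n$). *)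

theory Defs
  imports "HOL-Probability.Probability"
begin

text \<open>A bucket tree is represented as a list of buckets (nodes). Bucket i is a pair
  (parent, labels): parent is None for the root (bucket 0) and Some j otherwise,
  labels is the list of labels stored in the bucket.\<close>

type_synonym btree = "(nat option \<times> nat list) list"

datatype family = BRT | Dary nat | PORT real

definition cap :: "btree \<Rightarrow> nat \<Rightarrow> nat" where
  "cap T v = length (snd (T ! v))"

definition outdeg :: "btree \<Rightarrow> nat \<Rightarrow> nat" where
  "outdeg T v = card {j. j < length T \<and> fst (T ! j) = Some v}"

fun sel_prob :: "family \<Rightarrow> nat \<Rightarrow> btree \<Rightarrow> nat \<Rightarrow> real" where
  "sel_prob BRT n T v = real (cap T v) / real n"
| "sel_prob (Dary d) n T v =
     ((real d - 1) * real (cap T v) + 1 - real (outdeg T v)) / ((real d - 1) * real n + 1)"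
| "sel_prob (PORT \<alpha>) n T v =
     (real (outdeg T v) + (\<alpha> + 1) * real (cap T v) - 1) / ((\<alpha> + 1) * real n - 1)"

definition sel_pmf :: "family \<Rightarrow> nat \<Rightarrow> btree \<Rightarrow> nat pmf" where
  "sel_pmf F n T = pmf_of_list (map (\<lambda>v. (v, sel_prob F n T v)) [0..<length T])"

definition grow :: "nat \<Rightarrow> nat \<Rightarrow> btree \<Rightarrow> nat \<Rightarrow> btree" where
  "grow b n T v =
     (if cap T v < b then T[v := (fst (T ! v), snd (T ! v) @ [Suc n])]
      else T @ [(Some v, [Suc n])])"

text \<open>Distribution of the random bucket tree of size n (meaningful for n \<ge> 1).\<close>
fun tree_dist :: "family \<Rightarrow> nat \<Rightarrow> nat \<Rightarrow> btree pmf" where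
  "tree_dist F b 0 = return_pmf [(None, [1])]"
| "tree_dist F b (Suc 0) = return_pmf [(None, [1])]"
| "tree_dist F b (Suc (Suc k)) =
     tree_dist F b (Suc k) \<bind> (\<lambda>T. map_pmf (grow b (Suc k) T) (sel_pmf F (Suc k) T))"

definition label_cap :: "btree \<Rightarrow> nat \<Rightarrow> nat" where
  "label_cap T l = cap T (THE i. i < length T \<and> l \<in> set (snd (T ! i)))"

definition num_cap :: "btree \<Rightarrow> nat \<Rightarrow> nat" where
  "num_cap T m = card {i. i < length T \<and> cap T i = m}"

definition K_prob :: "family \<Rightarrow> nat \<Rightarrow> nat \<Rightarrow> nat \<Rightarrow> real" where
  "K_prob F b n m = measure_pmf.prob (tree_dist F b (Suc n)) {T. label_cap T (Suc n) = m}"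

definition EN :: "family \<Rightarrow> nat \<Rightarrow> nat \<Rightarrow> nat \<Rightarrow> real" where
  "EN F b n m = measure_pmf.expectation (tree_dist F b n) (\<lambda>T. real (num_cap T m))"

end

theory Submission
  imports Defs
begin

text \<open>Condition on the tree \<open>T\<close> of size \<open>n\<close>. Label \<open>n + 1\<close> ends up in a bucket of
  capacity \<open>m \<ge> 2\<close> exactly when the chosen node had capacity \<open>m - 1 < b\<close>; such a node is a
  leaf, so its selection probability depends on \<open>m\<close> only, and the conditional probability is
  \<open>N\<^sub>n\<^sub>,\<^sub>m\<^sub>-\<^sub>1\<close> times it. Label \<open>n + 1\<close> opens a new bucket exactly when a saturated node is
  chosen. The selection probabilities of the saturated nodes also involve their out-degrees, but
  only saturated nodes have children, so these out-degrees add up to the number of edges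
  \<open>|T| - 1 = \<Sum>\<^sub>j N\<^sub>n\<^sub>,\<^sub>j - 1\<close>. Both conditional probabilities are linear in the \<open>N\<^sub>n\<^sub>,\<^sub>j\<close>,
  so taking expectations gives the theorem.\<close>

lemma sum_card_fibres:
  assumes "finite I" "finite A"
  shows "(\<Sum>a\<in>A. card {i\<in>I. f i = a}) = card {i\<in>I. f i \<in> A}"
proof -
  have "{i\<in>I. f i \<in> A} = (\<Union>a\<in>A. {i\<in>I. f i = a})" by auto
  also have "card \<dots> = (\<Sum>a\<in>A. card {i\<in>I. f i = a})"
    using assms by (intro card_UN_disjoint) auto
  finally show ?thesis ..
qed

lemma measure_bind_pmf:
  "measure_pmf.prob (bind_pmf M N) A = measure_pmf.expectation M (\<lambda>x. measure_pmf.prob (N x) A)"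
  unfolding measure_pmf_bind
  by (rule measure_pmf.measure_bind[where N="count_space UNIV"])
     (auto simp: space_subprob_algebra measure_pmf.subprob_space_axioms)

fun valid_family :: "family \<Rightarrow> bool" where
  "valid_family BRT \<longleftrightarrow> True"
| "valid_family (Dary d) \<longleftrightarrow> d \<ge> 2"
| "valid_family (PORT \<alpha>) \<longleftrightarrow> \<alpha> > 0"

text \<open>All three rules are of the form
  \<open>p(v) = (\<kappa> c(v) + \<beta> (1 - d\<^sup>+(v))) / (\<kappa> n + \<beta>)\<close>, with \<open>(\<kappa>, \<beta>)\<close> equal to \<open>(1, 0)\<close>,
  \<open>(d - 1, 1)\<close> and \<open>(\<alpha> + 1, -1)\<close> respectively.\<close>

fun cap_coeff :: "family \<Rightarrow> real" where
  "cap_coeff BRT = 1"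
| "cap_coeff (Dary d) = real d - 1"
| "cap_coeff (PORT \<alpha>) = \<alpha> + 1"

fun offset_coeff :: "family \<Rightarrow> real" where
  "offset_coeff BRT = 0"
| "offset_coeff (Dary d) = 1"
| "offset_coeff (PORT \<alpha>) = -1"

definition node_weight :: "family \<Rightarrow> btree \<Rightarrow> nat \<Rightarrow> real" where
  "node_weight F T v = cap_coeff F * real (cap T v) + offset_coeff F * (1 - real (outdeg T v))"

definition total_weight :: "family \<Rightarrow> nat \<Rightarrow> real" where
  "total_weight F n = cap_coeff F * real n + offset_coeff F"

lemma sel_prob_eq_node_weight: "sel_prob F n T v = node_weight F T v / total_weight F n"
  by (cases F) (simp_all add: node_weight_def total_weight_def algebra_simps)

lemma total_weight_pos:
  assumes "valid_family F" "n \<ge> 1"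
  shows "total_weight F n > 0"
proof (cases F)
  case (PORT \<alpha>)
  with assms have "\<alpha> > 0" "\<alpha> + 1 \<le> (\<alpha> + 1) * real n" by simp_all
  moreover have "total_weight F n = (\<alpha> + 1) * real n - 1"
    using PORT by (simp add: total_weight_def)
  ultimately show ?thesis by linarith
qed (use assms in \<open>auto simp: total_weight_def add_pos_nonneg\<close>)

definition bucket_tree :: "nat \<Rightarrow> nat \<Rightarrow> btree \<Rightarrow> bool" where
  "bucket_tree b n T \<longleftrightarrow>
     T \<noteq> [] \<and>
     (\<forall>j<length T. fst (T ! j) = None \<longleftrightarrow> j = 0) \<and>
     (\<forall>j<length T. \<forall>p. fst (T ! j) = Some p \<longrightarrow> p < length T \<and> cap T p = b) \<and>
     (\<forall>v<length T. 1 \<le> cap T v \<and> cap T v \<le> b) \<and>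
     (\<Sum>v<length T. cap T v) = n \<and>
     (\<forall>v<length T. \<forall>l\<in>set (snd (T ! v)). l \<le> n)"

lemma cap_bounds:
  assumes "bucket_tree b n T" "v < length T"
  shows "1 \<le> cap T v" "cap T v \<le> b"
  using assms by (simp_all add: bucket_tree_def)

lemma sum_outdeg:
  assumes "bucket_tree b n T"
  shows "(\<Sum>v<length T. outdeg T v) = length T - 1"
proof -
  have "(\<Sum>v<length T. outdeg T v)
      = (\<Sum>a\<in>Some ` {..<length T}. card {j\<in>{..<length T}. fst (T ! j) = a})"
    by (simp add: sum.reindex outdeg_def)
  also have "\<dots> = card {j\<in>{..<length T}. fst (T ! j) \<in> Some ` {..<length T}}"
    by (rule sum_card_fibres) auto
  also have "{j\<in>{..<length T}. fst (T ! j) \<in> Some ` {..<length T}} = {1..<length T}"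
    using assms by (fastforce simp: bucket_tree_def)
  finally show ?thesis by simp
qed

lemma sum_num_cap:
  assumes "bucket_tree b n T"
  shows "(\<Sum>j=1..b. num_cap T j) = length T"
proof -
  have "(\<Sum>j=1..b. num_cap T j) = card {v\<in>{..<length T}. cap T v \<in> {1..b}}"
    unfolding num_cap_def by (subst sum_card_fibres[symmetric]) auto
  also have "{v\<in>{..<length T}. cap T v \<in> {1..b}} = {..<length T}"
    using assms by (auto simp: bucket_tree_def)
  finally show ?thesis by simp
qed

lemma outdeg_unsaturated:
  assumes "bucket_tree b n T" "cap T v < b"
  shows "outdeg T v = 0"
  using assms by (auto simp: bucket_tree_def outdeg_def)

lemma sum_node_weight:
  assumes "bucket_tree b n T"
  shows "(\<Sum>v<length T. node_weight F T v) = total_weight F n"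
proof -
  have "length T \<ge> 1" using assms by (simp add: bucket_tree_def Suc_le_eq)
  then have "(\<Sum>v<length T. real (outdeg T v)) = real (length T) - 1"
    using sum_outdeg[OF assms] by (simp flip: of_nat_sum add: of_nat_diff)
  moreover have "(\<Sum>v<length T. real (cap T v)) = real n"
    using assms by (simp flip: of_nat_sum add: bucket_tree_def)
  ultimately show ?thesis
    by (simp add: node_weight_def total_weight_def sum.distrib sum_subtractf
        right_diff_distrib flip: sum_distrib_left)
qed

text \<open>A bucket of capacity \<open>c\<close> in a \<open>(b, d)\<close>-ary tree has \<open>(d - 1) c + 1\<close> child slots; this
  bound keeps the selection weights of the \<open>(b, d)\<close>-ary rule nonnegative.\<close>

definition outdeg_admissible :: "family \<Rightarrow> btree \<Rightarrow> bool" where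
  "outdeg_admissible F T \<longleftrightarrow>
     (\<forall>d. F = Dary d \<longrightarrow> (\<forall>v<length T. outdeg T v \<le> (d - 1) * cap T v + 1))"

lemma node_weight_nonneg:
  assumes "valid_family F" "bucket_tree b n T" "outdeg_admissible F T" "v < length T"
  shows "node_weight F T v \<ge> 0"
proof (cases F)
  case BRT
  then show ?thesis by (simp add: node_weight_def)
next
  case (Dary d)
  with assms have "outdeg T v \<le> (d - 1) * cap T v + 1" "d \<ge> 2"
    by (auto simp: outdeg_admissible_def)
  then have "real (outdeg T v) \<le> real (d - 1) * real (cap T v) + 1"
    by (metis of_nat_1 of_nat_add of_nat_le_iff of_nat_mult)
  with \<open>d \<ge> 2\<close> have "real (outdeg T v) \<le> (real d - 1) * real (cap T v) + 1"
    by (simp add: of_nat_diff)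
  with Dary show ?thesis by (simp add: node_weight_def)
next
  case (PORT \<alpha>)
  with assms have "\<alpha> > 0" "\<alpha> + 1 \<le> (\<alpha> + 1) * real (cap T v)"
    by (auto simp: bucket_tree_def)
  moreover have "node_weight F T v = (\<alpha> + 1) * real (cap T v) - 1 + real (outdeg T v)"
    using PORT by (simp add: node_weight_def)
  ultimately show ?thesis by linarith
qed

lemma pmf_of_list_wf_sel:
  assumes "valid_family F" "n \<ge> 1" "bucket_tree b n T" "outdeg_admissible F T"
  shows "pmf_of_list_wf (map (\<lambda>v. (v, sel_prob F n T v)) [0..<length T])"
proof (rule pmf_of_list_wfI)
  show "x \<ge> 0" if "x \<in> set (map snd (map (\<lambda>v. (v, sel_prob F n T v)) [0..<length T]))" for x
    using that node_weight_nonneg[OF assms(1,3,4)] total_weight_pos[OF assms(1,2)]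
    by (auto simp: sel_prob_eq_node_weight)
  have "sum_list (map snd (map (\<lambda>v. (v, sel_prob F n T v)) [0..<length T]))
      = (\<Sum>v<length T. node_weight F T v) / total_weight F n"
    by (simp add: sel_prob_eq_node_weight sum_list_distinct_conv_sum_set atLeast0LessThan
        sum_divide_distrib comp_def)
  then show "sum_list (map snd (map (\<lambda>v. (v, sel_prob F n T v)) [0..<length T])) = 1"
    using sum_node_weight[OF assms(3)] total_weight_pos[OF assms(1,2)] by simp
qed

lemma measure_sel_pmf:
  assumes "valid_family F" "n \<ge> 1" "bucket_tree b n T" "outdeg_admissible F T"
  shows "measure_pmf.prob (sel_pmf F n T) A = (\<Sum>v\<in>{..<length T} \<inter> A. sel_prob F n T v)"
proof -
  have "set (filter (\<lambda>v. v \<in> A) [0..<length T]) = {..<length T} \<inter> A" by auto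
  then show ?thesis
    unfolding sel_pmf_def measure_pmf_of_list[OF pmf_of_list_wf_sel[OF assms]]
    by (simp add: filter_map comp_def sum_list_distinct_conv_sum_set)
qed

lemma set_pmf_sel_pmf:
  assumes "valid_family F" "n \<ge> 1" "bucket_tree b n T" "outdeg_admissible F T"
  shows "set_pmf (sel_pmf F n T) = {v. v < length T \<and> node_weight F T v > 0}"
proof -
  have "pmf (sel_pmf F n T) v = (if v < length T then sel_prob F n T v else 0)" for v
    using measure_sel_pmf[OF assms, of "{v}"] by (simp add: measure_pmf_single)
  then show ?thesis
    using node_weight_nonneg[OF assms(1,3,4)] total_weight_pos[OF assms(1,2)]
    by (force simp: set_pmf_eq sel_prob_eq_node_weight order.strict_iff_order)
qed

lemma length_grow: "length (grow b n T v) = (if cap T v < b then length T else Suc (length T))"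
  by (simp add: grow_def)

lemma cap_grow:
  assumes "u < length T"
  shows "cap (grow b n T v) u = (if u = v \<and> cap T v < b then Suc (cap T v) else cap T u)"
  using assms by (auto simp: grow_def cap_def nth_list_update nth_append)

lemma cap_grow_new_bucket:
  assumes "\<not> cap T v < b"
  shows "cap (grow b n T v) (length T) = 1"
  using assms by (simp add: grow_def cap_def)

lemma outdeg_grow:
  assumes "v < length T"
  shows "outdeg (grow b n T v) u = outdeg T u + (if u = v \<and> \<not> cap T v < b then 1 else 0)"
proof (cases "cap T v < b")
  case True
  then have "{j. j < length (grow b n T v) \<and> fst (grow b n T v ! j) = Some u}
      = {j. j < length T \<and> fst (T ! j) = Some u}"
    using assms by (auto simp: grow_def nth_list_update)
  with True show ?thesis by (simp add: outdeg_def)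
next
  case False
  let ?S = "{j. j < length T \<and> fst (T ! j) = Some u}"
  from False have "{j. j < length (grow b n T v) \<and> fst (grow b n T v ! j) = Some u}
      = (if u = v then insert (length T) ?S else ?S)"
    by (auto simp: grow_def nth_append less_Suc_eq)
  with False show ?thesis by (simp add: outdeg_def)
qed

lemma bucket_tree_grow:
  assumes "b \<ge> 1" "bucket_tree b n T" "v < length T"
  shows "bucket_tree b (Suc n) (grow b n T v)"
proof (cases "cap T v < b")
  case True
  have "(\<Sum>u<length T. cap (grow b n T v) u) = (\<Sum>u<length T. cap T u + (if u = v then 1 else 0))"
    using True by (intro sum.cong) (simp_all add: cap_grow)
  then have "(\<Sum>u<length T. cap (grow b n T v) u) = Suc n"
    using assms(2,3) by (simp add: sum.distrib bucket_tree_def)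
  with True assms show ?thesis
    by (auto simp: bucket_tree_def grow_def cap_def nth_list_update intro: le_SucI)
next
  case False
  have "(\<Sum>u<Suc (length T). cap (grow b n T v) u) = Suc n"
    using False assms(2) by (simp add: cap_grow cap_grow_new_bucket bucket_tree_def)
  with False assms show ?thesis
    by (auto simp: bucket_tree_def grow_def cap_def nth_append less_Suc_eq intro: le_SucI)
qed

lemma outdeg_admissible_grow:
  assumes "valid_family F" "bucket_tree b n T" "outdeg_admissible F T"
    and "v < length T" "node_weight F T v > 0"
  shows "outdeg_admissible F (grow b n T v)"
  unfolding outdeg_admissible_def
proof (intro allI impI)
  fix d u assume F: "F = Dary d" and u: "u < length (grow b n T v)"
  have bound: "outdeg T w \<le> (d - 1) * cap T w + 1" if "w < length T" for w
    using assms(3) F that by (simp add: outdeg_admissible_def)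
  show "outdeg (grow b n T v) u \<le> (d - 1) * cap (grow b n T v) u + 1"
  proof (cases "cap T v < b")
    case True
    with u have "u < length T" by (simp add: length_grow)
    with True bound[of u] show ?thesis
      by (cases "u = v") (simp_all add: outdeg_grow[OF assms(4)] cap_grow)
  next
    case False
    consider "u < length T" "u \<noteq> v" | "u = v" | "u = length T"
      using u False by (auto simp: length_grow less_Suc_eq)
    then show ?thesis
    proof cases
      case 1
      with bound[of u] show ?thesis by (simp add: outdeg_grow[OF assms(4)] cap_grow)
    next
      case 2
      from assms(1) F have "d \<ge> 2" by simp
      \<comment> \<open>\<open>v\<close> had a free slot, since it was chosen with positive probability\<close>
      with assms(5) F have "real (outdeg T v) < real ((d - 1) * cap T v + 1)"
        by (simp add: node_weight_def of_nat_diff)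
      then have "outdeg T v < (d - 1) * cap T v + 1"
        by (simp only: of_nat_less_iff)
      with 2 False assms(4) show ?thesis by (simp add: outdeg_grow cap_grow)
    next
      case 3
      have "outdeg T (length T) = 0"
        using assms(2) by (auto simp: outdeg_def bucket_tree_def)
      with 3 assms(4) show ?thesis by (simp add: outdeg_grow)
    qed
  qed
qed

definition inserted_cap :: "nat \<Rightarrow> btree \<Rightarrow> nat \<Rightarrow> nat" where
  "inserted_cap b T v = (if cap T v < b then Suc (cap T v) else 1)"

lemma label_cap_eqI:
  assumes "i < length T" "l \<in> set (snd (T ! i))"
    and "\<And>j. j < length T \<Longrightarrow> l \<in> set (snd (T ! j)) \<Longrightarrow> j = i"
  shows "label_cap T l = cap T i"
proof -
  have "(THE j. j < length T \<and> l \<in> set (snd (T ! j))) = i"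
    using assms by (intro the_equality) blast+
  then show ?thesis by (simp add: label_cap_def)
qed

lemma label_cap_grow:
  assumes "bucket_tree b n T" "v < length T"
  shows "label_cap (grow b n T v) (Suc n) = inserted_cap b T v"
proof -
  have old: "Suc n \<notin> set (snd (T ! j))" if "j < length T" for j
    using assms(1) that by (fastforce simp: bucket_tree_def)
  show ?thesis
  proof (cases "cap T v < b")
    case True
    with assms(2) old have "label_cap (grow b n T v) (Suc n) = cap (grow b n T v) v"
      by (intro label_cap_eqI) (auto simp: grow_def nth_list_update split: if_splits)
    with True assms(2) show ?thesis by (simp add: cap_grow inserted_cap_def)
  next
    case False
    with old have "label_cap (grow b n T v) (Suc n) = cap (grow b n T v) (length T)"
      by (intro label_cap_eqI) (auto simp: grow_def nth_append less_Suc_eq)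
    with False show ?thesis by (simp add: cap_grow_new_bucket inserted_cap_def)
  qed
qed

lemma tree_dist_Suc:
  assumes "n \<ge> 1"
  shows "tree_dist F b (Suc n) = tree_dist F b n \<bind> (\<lambda>T. map_pmf (grow b n T) (sel_pmf F n T))"
  using assms by (cases n) auto

lemma set_pmf_tree_dist_bucket_tree:
  assumes "valid_family F" "b \<ge> 1" "n \<ge> 1" "T \<in> set_pmf (tree_dist F b n)"
  shows "bucket_tree b n T \<and> outdeg_admissible F T"
  using assms(3,4)
proof (induction n arbitrary: T rule: nat_induct_at_least)
  case base
  then have T: "T = [(None, [1])]" by simp
  then have "{j. j < length T \<and> fst (T ! j) = Some 0} = {}" by auto
  then have "outdeg T 0 = 0" by (simp add: outdeg_def)
  with T assms(2) show ?case
    by (auto simp: bucket_tree_def outdeg_admissible_def cap_def)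
next
  case (Suc n)
  then obtain T0 v where T0: "T0 \<in> set_pmf (tree_dist F b n)"
    and v: "v \<in> set_pmf (sel_pmf F n T0)" and T: "T = grow b n T0 v"
    by (auto simp: tree_dist_Suc)
  from Suc.IH[OF T0] have "bucket_tree b n T0" "outdeg_admissible F T0" by auto
  moreover from v this have "v < length T0" "node_weight F T0 v > 0"
    using set_pmf_sel_pmf[OF assms(1) Suc.hyps] by auto
  ultimately show ?case
    using T bucket_tree_grow[OF assms(2)] outdeg_admissible_grow[OF assms(1)] by blast
qed

lemma finite_set_pmf_tree_dist:
  assumes "valid_family F" "b \<ge> 1" "n \<ge> 1"
  shows "finite (set_pmf (tree_dist F b n))"
  using assms(3)
proof (induction n rule: nat_induct_at_least)
  case base
  then show ?case by simp
next
  case (Suc n)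
  have "finite (set_pmf (sel_pmf F n T))" if "T \<in> set_pmf (tree_dist F b n)" for T
  proof -
    from set_pmf_tree_dist_bucket_tree[OF assms(1,2) Suc.hyps that]
    have "set_pmf (sel_pmf F n T) = {v. v < length T \<and> node_weight F T v > 0}"
      using set_pmf_sel_pmf[OF assms(1) Suc.hyps] by blast
    then show ?thesis by simp
  qed
  with Suc show ?case by (simp add: tree_dist_Suc)
qed

definition cond_K_prob :: "family \<Rightarrow> nat \<Rightarrow> nat \<Rightarrow> btree \<Rightarrow> nat \<Rightarrow> real" where
  "cond_K_prob F b n T m = (\<Sum>v | v < length T \<and> inserted_cap b T v = m. sel_prob F n T v)"

lemma K_prob_eq_expectation:
  assumes "valid_family F" "b \<ge> 1" "n \<ge> 1"
  shows "K_prob F b n m = measure_pmf.expectation (tree_dist F b n) (\<lambda>T. cond_K_prob F b n T m)"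
proof -
  have "K_prob F b n m = measure_pmf.expectation (tree_dist F b n)
      (\<lambda>T. measure_pmf.prob (sel_pmf F n T) {v. label_cap (grow b n T v) (Suc n) = m})"
    by (simp add: K_prob_def tree_dist_Suc[OF assms(3)] measure_bind_pmf vimage_def)
  also have "\<dots> = measure_pmf.expectation (tree_dist F b n) (\<lambda>T. cond_K_prob F b n T m)"
  proof (intro integral_cong_AE AE_pmfI)
    fix T assume "T \<in> set_pmf (tree_dist F b n)"
    with assms have T: "bucket_tree b n T" "outdeg_admissible F T"
      using set_pmf_tree_dist_bucket_tree by blast+
    have "measure_pmf.prob (sel_pmf F n T) {v. label_cap (grow b n T v) (Suc n) = m}
        = (\<Sum>v\<in>{..<length T} \<inter> {v. label_cap (grow b n T v) (Suc n) = m}. sel_prob F n T v)"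
      by (rule measure_sel_pmf[OF assms(1,3) T])
    also have "{..<length T} \<inter> {v. label_cap (grow b n T v) (Suc n) = m}
        = {v. v < length T \<and> inserted_cap b T v = m}"
      using label_cap_grow[OF T(1)] by auto
    finally show "measure_pmf.prob (sel_pmf F n T) {v. label_cap (grow b n T v) (Suc n) = m}
        = cond_K_prob F b n T m"
      unfolding cond_K_prob_def .
  qed simp_all
  finally show ?thesis .
qed

lemma cond_K_prob_unsaturated:
  assumes "bucket_tree b n T" "2 \<le> m" "m \<le> b"
  shows "cond_K_prob F b n T m
    = real (num_cap T (m - 1)) * ((cap_coeff F * real (m - 1) + offset_coeff F) / total_weight F n)"
proof -
  have "{v. v < length T \<and> inserted_cap b T v = m} = {v. v < length T \<and> cap T v = m - 1}"
    using assms(2,3) cap_bounds[OF assms(1)] by (auto simp: inserted_cap_def)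
  moreover have "sel_prob F n T v = (cap_coeff F * real (m - 1) + offset_coeff F) / total_weight F n"
    if "cap T v = m - 1" for v
    using that assms(2,3) outdeg_unsaturated[OF assms(1)]
    by (simp add: sel_prob_eq_node_weight node_weight_def)
  ultimately show ?thesis by (simp add: cond_K_prob_def num_cap_def)
qed

lemma sum_outdeg_saturated:
  assumes "bucket_tree b n T"
  shows "(\<Sum>v | v < length T \<and> cap T v = b. outdeg T v) = length T - 1"
proof -
  have "(\<Sum>v | v < length T \<and> cap T v = b. outdeg T v) = (\<Sum>v<length T. outdeg T v)"
  proof (rule sum.mono_neutral_left)
    show "\<forall>v\<in>{..<length T} - {v. v < length T \<and> cap T v = b}. outdeg T v = 0"
      using cap_bounds[OF assms] outdeg_unsaturated[OF assms] by (auto simp: le_neq_implies_less)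
  qed auto
  with sum_outdeg[OF assms] show ?thesis by simp
qed

lemma cond_K_prob_saturated:
  assumes "bucket_tree b n T"
  shows "cond_K_prob F b n T 1
    = (real (num_cap T b) * (cap_coeff F * real b + offset_coeff F)
        + offset_coeff F * (1 - (\<Sum>j=1..b. real (num_cap T j)))) / total_weight F n"
proof -
  let ?S = "{v. v < length T \<and> cap T v = b}"
  have "length T \<ge> 1" using assms by (simp add: bucket_tree_def Suc_le_eq)
  then have outdegs: "(\<Sum>v\<in>?S. real (outdeg T v)) = (\<Sum>j=1..b. real (num_cap T j)) - 1"
    using sum_outdeg_saturated[OF assms] sum_num_cap[OF assms]
    by (simp flip: of_nat_sum add: of_nat_diff)
  have "inserted_cap b T v = 1 \<longleftrightarrow> cap T v = b" if "v < length T" for v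
    using cap_bounds[OF assms that] by (auto simp: inserted_cap_def)
  then have "{v. v < length T \<and> inserted_cap b T v = 1} = ?S" by auto
  then have "cond_K_prob F b n T 1 = (\<Sum>v\<in>?S. node_weight F T v) / total_weight F n"
    by (simp add: cond_K_prob_def sel_prob_eq_node_weight sum_divide_distrib)
  also have "(\<Sum>v\<in>?S. node_weight F T v)
      = (\<Sum>v\<in>?S. (cap_coeff F * real b + offset_coeff F) - offset_coeff F * real (outdeg T v))"
    by (intro sum.cong) (auto simp: node_weight_def algebra_simps)
  also have "\<dots> = real (num_cap T b) * (cap_coeff F * real b + offset_coeff F)
      - offset_coeff F * ((\<Sum>j=1..b. real (num_cap T j)) - 1)"
    by (simp add: sum_subtractf outdegs num_cap_def flip: sum_distrib_left)
  finally show ?thesis by (simp add: right_diff_distrib)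
qed

lemma K_prob_unsaturated:
  assumes "valid_family F" "b \<ge> 1" "n \<ge> 1" "2 \<le> m" "m \<le> b"
  shows "K_prob F b n m
    = EN F b n (m - 1) * ((cap_coeff F * real (m - 1) + offset_coeff F) / total_weight F n)"
proof -
  have "K_prob F b n m = measure_pmf.expectation (tree_dist F b n)
      (\<lambda>T. real (num_cap T (m - 1)) * ((cap_coeff F * real (m - 1) + offset_coeff F) / total_weight F n))"
    unfolding K_prob_eq_expectation[OF assms(1-3)]
    using set_pmf_tree_dist_bucket_tree[OF assms(1-3)] cond_K_prob_unsaturated assms(4,5)
    by (intro integral_cong_AE AE_pmfI) auto
  then show ?thesis by (simp add: EN_def)
qed

lemma K_prob_saturated:
  assumes "valid_family F" "b \<ge> 1" "n \<ge> 1"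
  shows "K_prob F b n 1
    = (EN F b n b * (cap_coeff F * real b + offset_coeff F)
        + offset_coeff F * (1 - (\<Sum>j=1..b. EN F b n j))) / total_weight F n"
proof -
  let ?M = "measure_pmf (tree_dist F b n)"
  have int: "integrable ?M f" for f :: "btree \<Rightarrow> real"
    by (rule integrable_measure_pmf_finite[OF finite_set_pmf_tree_dist[OF assms]])
  have "K_prob F b n 1 = (\<integral>T. (real (num_cap T b) * (cap_coeff F * real b + offset_coeff F)
        + offset_coeff F * (1 - (\<Sum>j=1..b. real (num_cap T j)))) / total_weight F n \<partial>?M)"
    unfolding K_prob_eq_expectation[OF assms]
    using set_pmf_tree_dist_bucket_tree[OF assms] cond_K_prob_saturated
    by (intro integral_cong_AE AE_pmfI) auto
  also have "\<dots> = ((\<integral>T. real (num_cap T b) \<partial>?M) * (cap_coeff F * real b + offset_coeff F)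
        + offset_coeff F * (1 - (\<Sum>j=1..b. \<integral>T. real (num_cap T j) \<partial>?M))) / total_weight F n"
    by (simp only: integral_divide_zero Bochner_Integration.integral_add[OF int int]
        integral_mult_left_zero integral_mult_right_zero Bochner_Integration.integral_diff[OF int int]
        Bochner_Integration.integral_sum[OF int] measure_pmf.prob_space lebesgue_integral_const mult_1 scaleR_one)
  finally show ?thesis by (simp add: EN_def)
qed

theorem mainTheorem5:
  fixes F :: family and b n :: nat
  assumes "b \<ge> 1" and "n \<ge> 1"
    and "\<And>d. F = Dary d \<Longrightarrow> d \<ge> 2"
    and "\<And>\<alpha>. F = PORT \<alpha> \<Longrightarrow> \<alpha> > 0"
  shows "(\<forall>m\<in>{2..b}. K_prob F b n m = EN F b n (m - 1) *
           (case F of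
              BRT \<Rightarrow> (real m - 1) / real n
            | Dary d \<Rightarrow> ((real d - 1) * (real m - 1) + 1) / ((real d - 1) * real n + 1)
            | PORT \<alpha> \<Rightarrow> ((\<alpha> + 1) * (real m - 1) - 1) / ((\<alpha> + 1) * real n - 1)))
       \<and> K_prob F b n 1 =
           (case F of
              BRT \<Rightarrow> EN F b n b * real b / real n
            | Dary d \<Rightarrow> EN F b n b * ((real d - 1) * real b + 1) / ((real d - 1) * real n + 1)
                 + (1 - (\<Sum>j=1..b. EN F b n j)) / ((real d - 1) * real n + 1)
            | PORT \<alpha> \<Rightarrow> EN F b n b * ((\<alpha> + 1) * real b - 1) / ((\<alpha> + 1) * real n - 1)
                 + (-1 + (\<Sum>j=1..b. EN F b n j)) / ((\<alpha> + 1) * real n - 1))"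
proof -
  have F: "valid_family F" using assms(3,4) by (cases F) auto
  note unsaturated = K_prob_unsaturated[OF F assms(1,2)]
  note saturated = K_prob_saturated[OF F assms(1,2)]
  show ?thesis
  proof (cases F)
    case BRT
    with unsaturated saturated show ?thesis by (simp add: total_weight_def of_nat_diff)
  next
    case (Dary d)
    with unsaturated saturated show ?thesis
      by (simp add: total_weight_def of_nat_diff add_divide_distrib)
  next
    case (PORT \<alpha>)
    with unsaturated saturated show ?thesis
      by (simp add: total_weight_def of_nat_diff add_divide_distrib diff_divide_distrib)
  qed
qed

end
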